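(* Let $\mathbb{G}$ be a connected undirected graph on $m$ agents with neighbor sets $\mathcal{N}_i$. For each agent $i$, let $f_i:\mathbb{R}^n\to\mathbb{R}$, $A_i\in\mathbb{R}^{n_i\times n}$, $b_i\in\operatorname{image}A_i$, and let $P_i$ be the orthogonal projection matrix onto $\ker A_i$. Suppose each $f_i$ is convex and continuously differentiable with Lipschitz gradient; $\operatorname{rank}(\mathrm{col}\{A_1,\dots,A_m\})<n$; the set $\{x: A_ix=b_i\ \forall i\}$ is non-empty; and a (possibly non-unique) minimizer of $F(x)=\sum_{i=1}^m f_i(x)$ subject to $A_ix=b_i$ for all $i$ exists. Consider the dynamics $\dot x_i=-P_i\big(\nabla f_i(x_i)+\sum_{j\in\mathcal{N}_i}(x_i-x_j)+y_i\big)$, $\dot y_i=\sum_{j\in\mathcal{N}_i}(x_i-x_j)$, $y_i(0)=0$, $A_ix_i(0)=b_i$ (equivalent to the integral-feedback update $\dot x_i=-P_i(\nabla f_i(x_i)+\sum_{j\in\mathcal{N}_i}(x_i-x_j)+\int_0^t\sum_{j\in\mathcal{N}_i}(x_i-x_j))$). Call $(x_1^*,\dots,x_m^*,y_1^*,\dots,y_m^* )$ an equilibrium point if $A_ix_i^*=b_i$ for all $i$, $\sum_{i=1}^m y_i^*=0$, and for all $i$: $$0=-P_i\Big(\nabla f_i(x_i^* )+\sum_{j\in\mathcal{N}_i}(x_i^*-x_j^* )+y_i^*\Big),\qquad 0=\sum_{j\in\mathcal{N}_i}(x_i^*-x_j^* ).$$ Then an equilibrium point exists. Furthermore, for every equilibrium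 point there is $x^*\in\mathbb{R}^n$ with $x_i^*=x^*$ for all $i=1,\dots,m$, and $x^*$ minimizes $\sum_{i=1}^m f_i(x)$ subject to $A_ix=b_i$, $i=1,\dots,m$.
   Context: $\nabla f_i$ denotes the gradient of $f_i$. Neighbor relations are symmetric: $j\in\mathcal{N}_i$ iff $i\in\mathcal{N}_j$. The conditions $A_ix_i^*=b_i$ and $\sum_i y_i^*=0$ reflect invariants of the dynamics: $A_ix_i(t)=b_i$ for all $t$, and $y(t)$ stays in the image of the graph Laplacian (Kronecker) $L\otimes I_n$. *)

theory Defs
  imports "HOL-Analysis.Analysis"
begin

text \<open>Agents are the elements of a finite type 'a (m = CARD('a)).
  A matrix A_i in R^(n_i x n) is represented by the list of its rows.\<close>

definition undirected_simple_graph :: "('a \<Rightarrow> 'a set) \<Rightarrow> bool" where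
  "undirected_simple_graph N \<longleftrightarrow> (\<forall>i j. j \<in> N i \<longleftrightarrow> i \<in> N j) \<and> (\<forall>i. i \<notin> N i)"

definition graph_connected :: "('a \<Rightarrow> 'a set) \<Rightarrow> bool" where
  "graph_connected N \<longleftrightarrow> (\<forall>i j. (i, j) \<in> {(u, v). v \<in> N u}\<^sup>*)"

definition matvec :: "(real ^ 'n) list \<Rightarrow> real ^ 'n \<Rightarrow> real list" where
  "matvec A x = map (\<lambda>r. r \<bullet> x) A"

definition matker :: "(real ^ 'n) list \<Rightarrow> (real ^ 'n) set" where
  "matker A = {x. matvec A x = replicate (length A) 0}"

definition orth_proj_matrix :: "real ^ 'n ^ 'n \<Rightarrow> (real ^ 'n) set \<Rightarrow> bool" where
  "orth_proj_matrix P S \<longleftrightarrow>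
     (\<forall>x. P *v x \<in> S \<and> (\<forall>s\<in>S. (x - P *v x) \<bullet> s = 0))"

text \<open>Rank of the stacked matrix col{A_1,...,A_m} (row rank).\<close>
definition stacked_rank :: "('a \<Rightarrow> (real ^ 'n) list) \<Rightarrow> nat" where
  "stacked_rank A = nat (dim (\<Union>i. set (A i)))"

definition feasible :: "('a \<Rightarrow> (real ^ 'n) list) \<Rightarrow> ('a \<Rightarrow> real list) \<Rightarrow> real ^ 'n \<Rightarrow> bool" where
  "feasible A b x \<longleftrightarrow> (\<forall>i. matvec (A i) x = b i)"

definition is_constrained_minimizer ::
  "('a::finite \<Rightarrow> real ^ 'n \<Rightarrow> real) \<Rightarrow> ('a \<Rightarrow> (real ^ 'n) list) \<Rightarrow> ('a \<Rightarrow> real list) \<Rightarrow> real ^ 'n \<Rightarrow> bool" where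
  "is_constrained_minimizer f A b x \<longleftrightarrow>
     feasible A b x \<and> (\<forall>z. feasible A b z \<longrightarrow> (\<Sum>i\<in>UNIV. f i x) \<le> (\<Sum>i\<in>UNIV. f i z))"

definition equilibrium ::
  "('a::finite \<Rightarrow> 'a set) \<Rightarrow> ('a \<Rightarrow> real ^ 'n \<Rightarrow> real ^ 'n) \<Rightarrow> ('a \<Rightarrow> (real ^ 'n) list) \<Rightarrow>
   ('a \<Rightarrow> real list) \<Rightarrow> ('a \<Rightarrow> real ^ 'n ^ 'n) \<Rightarrow> ('a \<Rightarrow> real ^ 'n) \<Rightarrow> ('a \<Rightarrow> real ^ 'n) \<Rightarrow> bool" where
  "equilibrium N grad A b P xs ys \<longleftrightarrow>
     (\<forall>i. matvec (A i) (xs i) = b i) \<and> (\<Sum>i\<in>UNIV. ys i) = 0 \<and>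
     (\<forall>i. 0 = - (P i *v (grad i (xs i) + (\<Sum>j\<in>N i. xs i - xs j) + ys i))) \<and>
     (\<forall>i. 0 = (\<Sum>j\<in>N i. xs i - xs j))"

end

theory Submission
  imports Defs
begin

text \<open>At a constrained minimiser \<open>x\<close> of \<open>F\<close> the gradient \<open>\<Sum>i \<nabla>f\<^sub>i(x)\<close> annihilates the
  common kernel \<open>\<Inter>i ker A\<^sub>i\<close>, so it lies in the span of all rows and splits as \<open>\<Sum>i u\<^sub>i\<close> with
  \<open>u\<^sub>i\<close> in the row space of \<open>A\<^sub>i\<close>, i.e. \<open>P\<^sub>i u\<^sub>i = 0\<close>; then \<open>x\<^sub>i = x\<close>, \<open>y\<^sub>i = u\<^sub>i - \<nabla>f\<^sub>i(x)\<close> is an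
  equilibrium. Conversely, at an equilibrium every coordinate of \<open>i \<mapsto> x\<^sub>i\<close> is harmonic on the
  connected graph, hence constant by the maximum principle; and \<open>P\<^sub>i(\<nabla>f\<^sub>i(x) + y\<^sub>i) = 0\<close> with
  \<open>\<Sum>i y\<^sub>i = 0\<close> says that \<open>\<nabla>F(x)\<close> annihilates every feasible direction, which suffices for
  optimality of convex \<open>F\<close>.\<close>

lemma mem_matker_iff: "x \<in> matker A \<longleftrightarrow> (\<forall>r\<in>set A. r \<bullet> x = 0)"
  unfolding matker_def matvec_def by (induction A) auto

lemma matvec_eq_iff_diff_mem_matker: "matvec A z = matvec A x \<longleftrightarrow> z - x \<in> matker A"
  unfolding mem_matker_iff matvec_def by (induction A) (auto simp: inner_diff_right)

lemma feasible_iff_diff_mem_matker: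
  assumes "feasible A b x"
  shows "feasible A b z \<longleftrightarrow> (\<forall>i. z - x \<in> matker (A i))"
  using assms unfolding feasible_def by (metis matvec_eq_iff_diff_mem_matker)

lemma orth_proj_matrix_mulv_eq_0_iff:
  assumes "orth_proj_matrix P S"
  shows "P *v v = 0 \<longleftrightarrow> (\<forall>s\<in>S. v \<bullet> s = 0)"
proof
  assume "\<forall>s\<in>S. v \<bullet> s = 0"
  moreover have "P *v v \<in> S" "(v - P *v v) \<bullet> (P *v v) = 0"
    using assms unfolding orth_proj_matrix_def by auto
  ultimately have "(P *v v) \<bullet> (P *v v) = 0" by (simp add: inner_diff_left)
  then show "P *v v = 0" by simp
qed (use assms in \<open>metis orth_proj_matrix_def diff_zero\<close>)

lemma in_span_if_orthogonal_to_annihilator: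
  fixes g :: "'a::euclidean_space"
  assumes "\<And>v. \<forall>r\<in>R. r \<bullet> v = 0 \<Longrightarrow> g \<bullet> v = 0"
  shows "g \<in> span R"
proof -
  have "g \<in> (span R)\<^sup>\<bottom>\<^sup>\<bottom>"
    unfolding orthogonal_comp_def orthogonal_def
    using assms by (auto simp: inner_commute span_base)
  then show ?thesis by (simp add: orthogonal_comp_self)
qed

lemma span_UN_sum_decomposition:
  fixes S :: "'i \<Rightarrow> 'v::real_vector set"
  assumes "finite I" "x \<in> span (\<Union>i\<in>I. S i)"
  shows "\<exists>u. (\<forall>i\<in>I. u i \<in> span (S i)) \<and> x = (\<Sum>i\<in>I. u i)"
  using assms
proof (induction I arbitrary: x rule: finite_induct)
  case (insert a I)
  then obtain p q where pq: "x = p + q" "p \<in> span (S a)" "q \<in> span (\<Union>i\<in>I. S i)"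
    by (auto simp: span_Un)
  from insert.IH[OF pq(3)] obtain u where u: "\<forall>i\<in>I. u i \<in> span (S i)" "q = (\<Sum>i\<in>I. u i)"
    by blast
  have "(\<Sum>i\<in>I. (u(a := p)) i) = (\<Sum>i\<in>I. u i)"
    using insert.hyps(2) by (intro sum.cong) auto
  then show ?case
    using insert.hyps pq u by (intro exI[of _ "u(a := p)"]) auto
qed simp

lemma has_field_derivative_along_line:
  fixes F :: "'a::real_inner \<Rightarrow> real"
  assumes "(F has_derivative (\<lambda>h. G \<bullet> h)) (at x)"
  shows "((\<lambda>t. F (x + t *\<^sub>R v)) has_field_derivative G \<bullet> v) (at 0)"
proof -
  have "((\<lambda>t::real. x + t *\<^sub>R v) has_derivative (\<lambda>t. t *\<^sub>R v)) (at 0)"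
    by (intro derivative_eq_intros) auto
  then have "((\<lambda>t. F (x + t *\<^sub>R v)) has_derivative (\<lambda>t. G \<bullet> (t *\<^sub>R v))) (at 0)"
    by (rule has_derivative_compose) (simp add: assms)
  then show ?thesis
    unfolding has_field_derivative_def by (rule has_derivative_eq_rhs) (auto simp: fun_eq_iff)
qed

lemma min_along_line_imp_inner_zero:
  fixes F :: "'a::real_inner \<Rightarrow> real"
  assumes "(F has_derivative (\<lambda>h. G \<bullet> h)) (at x)" and "\<And>t. F x \<le> F (x + t *\<^sub>R v)"
  shows "G \<bullet> v = 0"
  using DERIV_local_min[OF has_field_derivative_along_line[OF assms(1)], of 1] assms(2) by simp

lemma convex_on_ge_tangent:
  fixes f :: "'a::real_inner \<Rightarrow> real"
  assumes cvx: "convex_on UNIV f" and deriv: "(f has_derivative (\<lambda>h. g \<bullet> h)) (at x)"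
  shows "f x + g \<bullet> (z - x) \<le> f z"
proof -
  define \<phi> where "\<phi> = (\<lambda>t::real. f (x + t *\<^sub>R (z - x)))"
  have "convex_on UNIV \<phi>"
  proof (rule convex_onI)
    fix s t u :: real assume "0 < u" "u < 1"
    have "x + ((1 - u) *\<^sub>R s + u *\<^sub>R t) *\<^sub>R (z - x)
        = (1 - u) *\<^sub>R (x + s *\<^sub>R (z - x)) + u *\<^sub>R (x + t *\<^sub>R (z - x))"
      by (simp add: algebra_simps)
    then show "\<phi> ((1 - u) *\<^sub>R s + u *\<^sub>R t) \<le> (1 - u) * \<phi> s + u * \<phi> t"
      using convex_onD[OF cvx, of u] \<open>0 < u\<close> \<open>u < 1\<close> unfolding \<phi>_def by simp
  qed simp
  moreover have "(\<phi> has_field_derivative g \<bullet> (z - x)) (at 0)"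
    unfolding \<phi>_def by (rule has_field_derivative_along_line[OF deriv])
  ultimately have "g \<bullet> (z - x) * (1 - 0) \<le> \<phi> 1 - \<phi> 0"
    by (intro convex_on_imp_above_tangent) auto
  then show ?thesis
    unfolding \<phi>_def by simp
qed

lemma harmonic_on_connected_graph_const:
  fixes h :: "'a::finite \<Rightarrow> real"
  assumes conn: "graph_connected N" and harmonic: "\<And>i. (\<Sum>j\<in>N i. h i - h j) = 0"
  shows "h i = h j"
proof -
  define M where "M = Max (range h)"
  have le_M: "h j \<le> M" for j
    unfolding M_def by simp
  have "M \<in> range h"
    unfolding M_def by (rule Max_in) simp_all
  then obtain i0 where "h i0 = M"
    by blast
  have max_step: "h q = M" if "h p = M" "q \<in> N p" for p q
  proof -
    have "(\<Sum>j\<in>N p. M - h j) = 0"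
      using harmonic[of p] that(1) by simp
    then have "\<forall>j\<in>N p. M - h j = 0"
      by (subst (asm) sum_nonneg_eq_0_iff) (auto simp: le_M)
    then show ?thesis using that(2) by auto
  qed
  have "h q = M" for q
  proof -
    have "(i0, q) \<in> {(u, v). v \<in> N u}\<^sup>*"
      using conn unfolding graph_connected_def by blast
    then show ?thesis
    proof (induction rule: rtrancl_induct)
      case (step p q)
      then have "h p = M" "q \<in> N p" by simp_all
      then show ?case by (rule max_step)
    qed (rule \<open>h i0 = M\<close>)
  qed
  then show ?thesis
    by simp
qed

lemma equilibrium_consensus:
  assumes "graph_connected N" and "equilibrium N grad A b P xs ys"
  shows "xs i = xs j"
proof -
  have "xs i $ k = xs j $ k" for k
  proof (rule harmonic_on_connected_graph_const[OF assms(1)])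
    fix l
    have "(\<Sum>j\<in>N l. xs l - xs j) $ k = 0"
      using assms(2) by (simp add: equilibrium_def)
    then show "(\<Sum>j\<in>N l. xs l $ k - xs j $ k) = 0"
      by simp
  qed
  then show ?thesis by (simp add: vec_eq_iff)
qed

lemma equilibrium_at_consensus_iff:
  "equilibrium N grad A b P (\<lambda>_. x) ys \<longleftrightarrow>
     feasible A b x \<and> (\<Sum>i\<in>UNIV. ys i) = 0 \<and> (\<forall>i. P i *v (grad i x + ys i) = 0)"
  unfolding equilibrium_def feasible_def by (auto simp: eq_commute[of 0])

lemma constrained_minimizer_gradient_orthogonal:
  fixes f :: "'a::finite \<Rightarrow> real ^ 'n \<Rightarrow> real"
  assumes min: "is_constrained_minimizer f A b x"
    and deriv: "\<And>i. (f i has_derivative (\<lambda>h. grad i x \<bullet> h)) (at x)"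
    and ker: "\<And>i. v \<in> matker (A i)"
  shows "(\<Sum>i\<in>UNIV. grad i x) \<bullet> v = 0"
proof (rule min_along_line_imp_inner_zero)
  have "((\<lambda>z. \<Sum>i\<in>UNIV. f i z) has_derivative (\<lambda>h. \<Sum>i\<in>UNIV. grad i x \<bullet> h)) (at x)"
    by (intro has_derivative_sum deriv)
  then show "((\<lambda>z. \<Sum>i\<in>UNIV. f i z) has_derivative (\<lambda>h. (\<Sum>i\<in>UNIV. grad i x) \<bullet> h)) (at x)"
    by (simp add: inner_sum_left)
  fix t
  have "feasible A b x"
    using min by (simp add: is_constrained_minimizer_def)
  then have "feasible A b (x + t *\<^sub>R v)"
    using ker by (simp add: feasible_iff_diff_mem_matker[of A b x] mem_matker_iff)
  then show "(\<Sum>i\<in>UNIV. f i x) \<le> (\<Sum>i\<in>UNIV. f i (x + t *\<^sub>R v))"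
    using min unfolding is_constrained_minimizer_def by blast
qed

lemma equilibrium_at_constrained_minimizer:
  fixes f :: "'a::finite \<Rightarrow> real ^ 'n \<Rightarrow> real"
  assumes min: "is_constrained_minimizer f A b x"
    and deriv: "\<And>i. (f i has_derivative (\<lambda>h. grad i x \<bullet> h)) (at x)"
    and proj: "\<And>i. orth_proj_matrix (P i) (matker (A i))"
  shows "\<exists>ys. equilibrium N grad A b P (\<lambda>_. x) ys"
proof -
  have "(\<Sum>i\<in>UNIV. grad i x) \<in> span (\<Union>i. set (A i))"
  proof (rule in_span_if_orthogonal_to_annihilator)
    fix v assume "\<forall>r\<in>(\<Union>i. set (A i)). r \<bullet> v = 0"
    then show "(\<Sum>i\<in>UNIV. grad i x) \<bullet> v = 0"
      by (intro constrained_minimizer_gradient_orthogonal[of f A b x grad, OF min deriv])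
        (auto simp: mem_matker_iff)
  qed
  then obtain u where u: "\<And>i. u i \<in> span (set (A i))" "(\<Sum>i\<in>UNIV. grad i x) = (\<Sum>i\<in>UNIV. u i)"
    using span_UN_sum_decomposition[OF finite_class.finite_UNIV] by blast
  have "P i *v u i = 0" for i
  proof -
    have "orthogonal s (u i)" if "s \<in> matker (A i)" for s
      using that by (intro orthogonal_to_span[OF u(1)])
        (simp add: mem_matker_iff orthogonal_def inner_commute)
    then show ?thesis
      by (simp add: orth_proj_matrix_mulv_eq_0_iff[OF proj] orthogonal_def inner_commute)
  qed
  then have "equilibrium N grad A b P (\<lambda>_. x) (\<lambda>i. u i - grad i x)"
    using min u(2) by (simp add: equilibrium_at_consensus_iff is_constrained_minimizer_def sum_subtractf)
  then show ?thesis by blast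
qed

lemma constrained_minimizer_at_equilibrium:
  fixes f :: "'a::finite \<Rightarrow> real ^ 'n \<Rightarrow> real"
  assumes eq: "equilibrium N grad A b P (\<lambda>_. x) ys"
    and convex: "\<And>i. convex_on UNIV (f i)"
    and deriv: "\<And>i. (f i has_derivative (\<lambda>h. grad i x \<bullet> h)) (at x)"
    and proj: "\<And>i. orth_proj_matrix (P i) (matker (A i))"
  shows "is_constrained_minimizer f A b x"
proof -
  have feas_x: "feasible A b x" and sum_ys: "(\<Sum>i\<in>UNIV. ys i) = 0"
    and stationary: "\<And>i. P i *v (grad i x + ys i) = 0"
    using eq by (simp_all add: equilibrium_at_consensus_iff)
  have "(\<Sum>i\<in>UNIV. f i x) \<le> (\<Sum>i\<in>UNIV. f i z)" if "feasible A b z" for z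
  proof -
    have "(grad i x + ys i) \<bullet> (z - x) = 0" for i
      using stationary[of i] \<open>feasible A b z\<close>
      by (simp add: orth_proj_matrix_mulv_eq_0_iff[OF proj] feasible_iff_diff_mem_matker[OF feas_x])
    then have "(\<Sum>i\<in>UNIV. grad i x \<bullet> (z - x)) = - (\<Sum>i\<in>UNIV. ys i) \<bullet> (z - x)"
      by (simp add: inner_add_left inner_sum_left eq_neg_iff_add_eq_0 flip: sum.distrib)
    also have "\<dots> = 0"
      using sum_ys by simp
    finally have "(\<Sum>i\<in>UNIV. f i x) = (\<Sum>i\<in>UNIV. f i x + grad i x \<bullet> (z - x))"
      by (simp add: sum.distrib)
    also have "\<dots> \<le> (\<Sum>i\<in>UNIV. f i z)"
      by (intro sum_mono convex_on_ge_tangent[OF convex deriv])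
    finally show ?thesis .
  qed
  then show ?thesis
    using feas_x unfolding is_constrained_minimizer_def by blast
qed

theorem lemma1:
  fixes N :: "'a::finite \<Rightarrow> 'a set"
    and f :: "'a \<Rightarrow> real ^ 'n \<Rightarrow> real"
    and grad :: "'a \<Rightarrow> real ^ 'n \<Rightarrow> real ^ 'n"
    and A :: "'a \<Rightarrow> (real ^ 'n) list"
    and b :: "'a \<Rightarrow> real list"
    and P :: "'a \<Rightarrow> real ^ 'n ^ 'n"
  assumes graph: "undirected_simple_graph N" and conn: "graph_connected N"
    and b_img: "\<And>i. \<exists>x. matvec (A i) x = b i"
    and proj: "\<And>i. orth_proj_matrix (P i) (matker (A i))"
    and convex: "\<And>i. convex_on UNIV (f i)"
    and grad_deriv: "\<And>i x. (f i has_derivative (\<lambda>h. grad i x \<bullet> h)) (at x)"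
    and grad_cont: "\<And>i. continuous_on UNIV (grad i)"
    and grad_lip: "\<And>i. \<exists>L. \<forall>x y. norm (grad i x - grad i y) \<le> L * norm (x - y)"
    and rank: "stacked_rank A < CARD('n)"
    and feas: "\<exists>x. feasible A b x"
    and minex: "\<exists>x. is_constrained_minimizer f A b x"
  shows "(\<exists>xs ys. equilibrium N grad A b P xs ys) \<and>
         (\<forall>xs ys. equilibrium N grad A b P xs ys \<longrightarrow>
            (\<exists>xstar. (\<forall>i. xs i = xstar) \<and> is_constrained_minimizer f A b xstar))"
proof (intro conjI allI impI)
  obtain x where min: "is_constrained_minimizer f A b x"
    using minex by blast
  show "\<exists>xs ys. equilibrium N grad A b P xs ys"
    using equilibrium_at_constrained_minimizer[where grad = grad, OF min grad_deriv proj] by blast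
next
  fix xs ys
  assume eq: "equilibrium N grad A b P xs ys"
  obtain x where consensus: "xs = (\<lambda>_. x)"
    using equilibrium_consensus[OF conn eq] by blast
  have "is_constrained_minimizer f A b x"
    using constrained_minimizer_at_equilibrium[OF eq[unfolded consensus] convex grad_deriv proj] .
  with consensus show "\<exists>xstar. (\<forall>i. xs i = xstar) \<and> is_constrained_minimizer f A b xstar"
    by blast
qed

end
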